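(* Let $A$ be a set and let $\mathcal{E}$ be a set of subsets of $A$ such that (C1) for every $K\subseteq A$, $K\in\mathcal{E}$ if and only if $A\setminus K\notin\mathcal{E}$; and (C2) if $K\in\mathcal{E}$ and $K\subseteq L\subseteq A$, then $L\in\mathcal{E}$. Suppose each member of $A$ chooses one of the six strict total orders on three candidates $a,b,c$, labelled by $\mathbb{Z}/6\mathbb{Z}$ as: $1: a>b>c$, $2: a>c>b$, $3: c>a>b$, $4: c>b>a$, $5: b>c>a$, $6: b>a>c$. For $p\in\mathbb{Z}/6\mathbb{Z}$ let $K(p)$ be the set of members who chose ranking $p$, and $K(p,q,r)=K(p)\cup K(q)\cup K(r)$. Define the collective preference by: for distinct candidates $x,y$, $x$ is collectively preferred to $y$ iff the set of members who rank $x$ above $y$ belongs to $\mathcal{E}$. If the collective preference is a strict total order on $\{a,b,c\}$, then there exists $p$ such that $K(p,p+1,p+2)\in\mathcal{E}$ and $K(p+1,p+2,p+3)\in\mathcal{E}$.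
   Context: Indices are taken modulo $6$. *)

theory Defs
  imports Main "HOL-Library.Numeral_Type"
begin

datatype cand = ca | cb | cc

text \<open>The six strict rankings, labelled by Z/6Z (label 6 is 0 in type 6), best first.\<close>
definition ranking :: "6 \<Rightarrow> cand list" where
  "ranking p =
     (if p = 1 then [ca, cb, cc]
      else if p = 2 then [ca, cc, cb]
      else if p = 3 then [cc, ca, cb]
      else if p = 4 then [cc, cb, ca]
      else if p = 5 then [cb, cc, ca]
      else [cb, ca, cc])"

definition prefers :: "6 \<Rightarrow> cand \<Rightarrow> cand \<Rightarrow> bool" where
  "prefers p x y \<longleftrightarrow>
     (\<exists>i j. i < j \<and> j < length (ranking p) \<and> ranking p ! i = x \<and> ranking p ! j = y)"

definition Kset :: "'v set \<Rightarrow> ('v \<Rightarrow> 6) \<Rightarrow> 6 \<Rightarrow> 'v set" where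
  "Kset A ch p = {v \<in> A. ch v = p}"

definition K3 :: "'v set \<Rightarrow> ('v \<Rightarrow> 6) \<Rightarrow> 6 \<Rightarrow> 6 \<Rightarrow> 6 \<Rightarrow> 'v set" where
  "K3 A ch p q r = Kset A ch p \<union> Kset A ch q \<union> Kset A ch r"

definition collective :: "'v set \<Rightarrow> 'v set set \<Rightarrow> ('v \<Rightarrow> 6) \<Rightarrow> cand rel" where
  "collective A E ch = {(x, y). x \<noteq> y \<and> {v \<in> A. prefers (ch v) x y} \<in> E}"

end

theory Submission
  imports Defs
begin

text \<open>For distinct candidates x and y, the rankings that put x above y form three cyclically
consecutive labels p, p+1, p+2, so the coalition preferring x to y is K(p, p+1, p+2). The top
candidate of the collective order beats both other candidates, and the two arcs belonging to the
pairs (x, y) and (x, z) with the same first component x are always adjacent.\<close>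

lemma UNIV_6: "(UNIV :: 6 set) = {0, 1, 2, 3, 4, 5}"
  by (rule sym, rule card_subset_eq) simp_all

lemma ordered_pair_in_Cons:
  "(\<exists>i j. i < j \<and> j < length (z # zs) \<and> (z # zs) ! i = x \<and> (z # zs) ! j = y) \<longleftrightarrow>
   x = z \<and> y \<in> set zs \<or> (\<exists>i j. i < j \<and> j < length zs \<and> zs ! i = x \<and> zs ! j = y)"
  (is "?lhs \<longleftrightarrow> _")
proof
  assume ?lhs
  then obtain i j where "i < j" "j < length (z # zs)" "(z # zs) ! i = x" "(z # zs) ! j = y"
    by blast
  then show "x = z \<and> y \<in> set zs \<or> (\<exists>i j. i < j \<and> j < length zs \<and> zs ! i = x \<and> zs ! j = y)"
    by (cases i; cases j) force+
next
  assume "x = z \<and> y \<in> set zs \<or> (\<exists>i j. i < j \<and> j < length zs \<and> zs ! i = x \<and> zs ! j = y)"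
  then show ?lhs
  proof
    assume "x = z \<and> y \<in> set zs"
    then obtain j where "j < length zs" "zs ! j = y" "x = z"
      by (auto simp: in_set_conv_nth)
    then show ?lhs
      by (intro exI[of _ 0] exI[of _ "Suc j"]) simp
  next
    assume "\<exists>i j. i < j \<and> j < length zs \<and> zs ! i = x \<and> zs ! j = y"
    then obtain i j where "i < j" "j < length zs" "zs ! i = x" "zs ! j = y"
      by blast
    then show ?lhs
      by (intro exI[of _ "Suc i"] exI[of _ "Suc j"]) simp
  qed
qed

lemma ordered_pair_in_triple:
  "(\<exists>i j. i < j \<and> j < length [u, v, w] \<and> [u, v, w] ! i = x \<and> [u, v, w] ! j = y) \<longleftrightarrow>
   x = u \<and> (y = v \<or> y = w) \<or> x = v \<and> y = w"
  by (simp only: ordered_pair_in_Cons) simp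

lemma strict_linear_order_on_finite_obtains_top:
  fixes R :: "'a::finite rel"
  assumes "strict_linear_order_on UNIV R"
  obtains x where "\<And>y. y \<noteq> x \<Longrightarrow> (x, y) \<in> R"
proof -
  from assms have "trans R" "irrefl R" "total_on UNIV R"
    by (simp_all add: strict_linear_order_on_def)
  then have "wf R"
    by (simp add: finite_acyclic_wf acyclic_irrefl)
  then obtain x where "\<And>y. (y, x) \<notin> R"
    by (metis UNIV_I wfE_min)
  with \<open>total_on UNIV R\<close> have "(x, y) \<in> R" if "y \<noteq> x" for y
    using that by (auto simp: total_on_def)
  then show thesis
    using that by blast
qed

lemma UNIV_cand: "(UNIV :: cand set) = {ca, cb, cc}"
  using cand.exhaust by auto

instance cand :: finite
  by standard (simp add: UNIV_cand)

lemma prefers_iff_ranking: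
  "prefers p x y \<longleftrightarrow>
   (\<exists>u v w. ranking p = [u, v, w] \<and> (x = u \<and> (y = v \<or> y = w) \<or> x = v \<and> y = w))"
proof -
  have "\<exists>u v w. ranking p = [u, v, w]"
    by (simp add: ranking_def)
  then obtain u v w where "ranking p = [u, v, w]"
    by blast
  then show ?thesis
    by (simp add: prefers_def ordered_pair_in_triple del: list.size)
qed

fun pref_arc :: "cand \<Rightarrow> cand \<Rightarrow> 6" where
  "pref_arc ca cc = 0"
| "pref_arc ca cb = 1"
| "pref_arc cc cb = 2"
| "pref_arc cc ca = 3"
| "pref_arc cb ca = 4"
| "pref_arc cb cc = 5"
| "pref_arc _ _ = 0" \<comment> \<open>junk value on the diagonal\<close>

lemma prefers_iff_pref_arc:
  assumes "x \<noteq> y"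
  shows "prefers q x y \<longleftrightarrow> q \<in> {pref_arc x y, pref_arc x y + 1, pref_arc x y + 2}"
proof -
  have "q \<in> {0, 1, 2, 3, 4, 5}"
    by (simp flip: UNIV_6)
  with assms show ?thesis
    by (cases x; cases y) (auto simp: prefers_iff_ranking ranking_def)
qed

lemma pref_arcs_from_candidate_consecutive:
  "\<exists>y z. y \<noteq> x \<and> z \<noteq> x \<and> pref_arc x z = pref_arc x y + 1"
proof (cases x)
  case ca
  then show ?thesis by (intro exI[of _ cc] exI[of _ cb]) simp
next
  case cb
  then show ?thesis by (intro exI[of _ ca] exI[of _ cc]) simp
next
  case cc
  then show ?thesis by (intro exI[of _ cb] exI[of _ ca]) simp
qed

lemma collective_iff_K3:
  "(x, y) \<in> collective A E ch \<longleftrightarrow>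
   x \<noteq> y \<and> K3 A ch (pref_arc x y) (pref_arc x y + 1) (pref_arc x y + 2) \<in> E"
proof (cases "x = y")
  case False
  then have "{v \<in> A. prefers (ch v) x y} = K3 A ch (pref_arc x y) (pref_arc x y + 1) (pref_arc x y + 2)"
    by (auto simp: prefers_iff_pref_arc K3_def Kset_def)
  then show ?thesis
    by (simp add: collective_def)
qed (simp add: collective_def)

theorem mainTheorem4:
  fixes A :: "'v set" and E :: "'v set set" and ch :: "'v \<Rightarrow> 6"
  assumes E_sub: "E \<subseteq> Pow A"
    and C1: "\<And>K. K \<subseteq> A \<Longrightarrow> (K \<in> E \<longleftrightarrow> A - K \<notin> E)"
    and C2: "\<And>K L. K \<in> E \<Longrightarrow> K \<subseteq> L \<Longrightarrow> L \<subseteq> A \<Longrightarrow> L \<in> E"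
    and lin: "strict_linear_order_on UNIV (collective A E ch)"
  shows "\<exists>p. K3 A ch p (p + 1) (p + 2) \<in> E \<and> K3 A ch (p + 1) (p + 2) (p + 3) \<in> E"
proof -
  obtain x where top: "\<And>y. y \<noteq> x \<Longrightarrow> (x, y) \<in> collective A E ch"
    using strict_linear_order_on_finite_obtains_top[OF lin] by blast
  obtain y z where "y \<noteq> x" "z \<noteq> x" and arc_z: "pref_arc x z = pref_arc x y + 1"
    using pref_arcs_from_candidate_consecutive by blast
  have "K3 A ch (pref_arc x y) (pref_arc x y + 1) (pref_arc x y + 2) \<in> E"
    using top[OF \<open>y \<noteq> x\<close>] by (simp add: collective_iff_K3)
  moreover have "K3 A ch (pref_arc x y + 1) (pref_arc x y + 2) (pref_arc x y + 3) \<in> E"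
    using top[OF \<open>z \<noteq> x\<close>] by (simp add: collective_iff_K3 arc_z add.assoc)
  ultimately show ?thesis
    by blast
qed

end
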